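(* Let $G\in C^2(\mathbb U)$ and let $\varphi$ be the trading strategy additively generated from $G$ (construction recalled in the context). For every $(k,n)\in\mathbb N^2$ and every $(t,\omega)$ with $t>0$ and $(t,\omega)\in D^{k,n}$, $$V^{\varphi}(t)=G^{k,n}(\mu_t)+EG(t)+C(t),$$ where $$EG(t):=\sum_{\ell=1}^{k-1}\Gamma^{G,\ell,N_{\tau_\ell}}(\tau_\ell)\,\sigma^{k,n}_{\ell+1,N_{\tau_{\ell+1}}}+\Gamma^{G,k,n}(t),$$ $$C(t):=\sum_{\ell=1}^{k}\Big[\sigma^{\ell,N_{\tau_\ell}}\,G^{\ell-1,N_{\tau_{\ell-1}}}(\mu_{\tau_{\ell-1}})-G^{\ell,N_{\tau_\ell}}(\mu_{\tau_{\ell-1}+})\Big]\sigma^{k,n}_{\ell+1,N_{\tau_{\ell+1}}},$$ with the conventions $\sigma^{k,n}_{k+1,N_{\tau_{k+1}}}:=1$, $N_{\tau_k}:=n$, $G^{0,N_0}:=G^0$.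
   Context: Standing setting. $(\Omega,\mathcal F,(\mathcal F_t)_{t\ge0},\mathbb P)$ is a filtered probability space satisfying the usual conditions; identities between random quantities hold almost surely. $\mathbb U:=\bigcup_{n\ge1}\mathbb R^n$. The capitalization process $S$ is a $\mathbb U$-valued progressive process with left and right limits at all times; $N:=\dim(S)$ is its dimension process, with deterministic initial dimension $N(0)=N_0\in\mathbb N$. $(\tau_k)_{k\ge0}$ is its minimal reset sequence: stopping times with $\tau_0=0$, $\tau_{k-1}\le\tau_k$, $\tau_k\to\infty$, $N(t)=N(\tau_{k-1}+)$ for $t\in(\tau_{k-1},\tau_k]$, and $S$ right-continuous on $(\tau_{k-1},\tau_k)$. For $(k,n)\in\mathbb N^2$ set $\Omega^{k,n}:=\{\tau_{k-1}<\infty,\ N(\tau_{k-1}+)=n\}$ and the $(k,n)$-dissection set $D^{k,n}:=\{(t,\omega):\omega\in\Omega^{k,n},\ \tau_{k-1}(\omega)<t\le\tau_k(\omega)\}$. Write $N_{\tau_j}:=N(\tau_j)$; thus $N_{\tau_0}=N_0$ and $N_{\tau_\ell}$ is the dimension during the $\ell$-th epoch $(\tau_{\ell-1},\tau_\ell]$. For a $\mathbb U$-valued process $X$, its integrator dissection $X^{k,n}$ is the $\mathbb R^n$-valued process equal to $X(t\wedge\tau_k)-X(\tau_{k-1}+)$ for $t>\tau_{k-1}$ on $\Omega^{k,n}$ and to $0\in\mathbb R^n$ otherwise. $S$ is a piecewise RCLL semimartingale (each $S^{k,n}$ is an $\mathbb R^n$-valued RCLL semimartingale), and on every $D^{k,n}$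 all $n$ components of $S$ are nonnegative with at least one strictly positive. Market weights: $\mu_i(0)=\mu^{(0)}_i:=S_i(0)/\sum_{j=1}^{N_0}S_j(0)$, and for $(t,\omega)\in D^{k,n}$, $\mu_i(t)=\mu^{(k,n)}_i(t):=S_i(t)/\sum_{j=1}^nS_j(t)$ (with $\mu^{(k,n)}:=0$ off $D^{k,n}$); $\mu^{k,n}$ is the integrator dissection of $\mu$; $\mu_t=\mu(t)$. A predictable $\mathbb U$-valued $H$ with $\dim H=\dim\mu$ belongs to $\mathcal L(\mu)$ if each $\mathbb R^n$-valued $H^{(k,n)}:=H\mathbb 1_{D^{k,n}}$ is $\mu^{k,n}$-integrable. For $t>\tau_{k-1}$, $I_{\mu^{k,n}}(\vartheta^{(k,n)})(t):=\int_{\tau_{k-1}+}^t\sum_{i=1}^n\vartheta^{(k,n)}_i(s)\,d\mu^{k,n}_i(s)$. Trading strategy: $\vartheta\in\mathcal L(\mu)$, with dissections $\vartheta^{(0)}$ (at time $0$) and $\vartheta^{(k,n)}$ (on $D^{k,n}$), such that on every $D^{k,n}$: (SF1) $\sum_{i=1}^n\vartheta^{(k,n)}_i(t)\mu^{(k,n)}_i(t)=\sum_{i=1}^n\vartheta^{(k,n)}_i(\tau_{k-1}+)\mu^{(k,n)}_i(\tau_{k-1}+)+I_{\mu^{k,n}}(\vartheta^{(k,n)})(t)$, and (SF2) $\sum_{i=1}^n\vartheta^{(k,n)}_i(\tau_{k-1}+)S_i(\tau_{k-1}+)=\sum_{i=1}^{N_{\tau_{k-1}}}\vartheta^{(k-1,N_{\tau_{k-1}})}_i(\tau_{k-1})S_i(\tau_{k-1})$,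 where $\vartheta^{(0,N_0)}:=\vartheta^{(0)}$. Relative wealth: $V^{\vartheta,0,N_0}(0):=\sum_{i=1}^{N_0}\vartheta^{(0)}_i\mu^{(0)}_i$, $V^{\vartheta,k,n}(t):=\sum_{i=1}^n\vartheta^{(k,n)}_i(t)\mu^{(k,n)}_i(t)$ on $D^{k,n}$; $V^\vartheta$ equals $V^{\vartheta,0,N_0}(0)$ at $t=0$ and $V^{\vartheta,k,n}(t)$ on $D^{k,n}$. Ratios: on $\Omega^{k,n}$, $\sigma^{k,n}:=\sum_{j=1}^{N_{\tau_{k-1}}}S_j(\tau_{k-1})\big/\sum_{j=1}^nS_j(\tau_{k-1}+)$, and for $1\le i\le k$, $\sigma^{k,n}_{i,N_{\tau_i}}:=\prod_{\ell=i}^k\sigma^{\ell,N_{\tau_\ell}}$ (with $N_{\tau_k}=n$). Generating functions: a piecewise function $G$ of $\mu$ is a family $G^0:\mathbb R^{N_0}\to\mathbb R$, $G^{k,n}:\mathbb R^n\to\mathbb R$, with $G(\mu_0)=G^0(\mu_0)$ and $G(\mu_t)=G^{k,n}(\mu_t)$ on $D^{k,n}$; $G\in C^2(\mathbb U)$ means every member is $C^2$. Standing normalization: $G^0(\mu_0)=1$. Gamma process: on $D^{k,n}$, $\Gamma^{G,k,n}(t):=G^{k,n}(\mu_{\tau_{k-1}+})-G^{k,n}(\mu_t)+I_{\mu^{k,n}}\big(\nabla G^{k,n}(\mu_-)\big)(t)$ (and $0$ elsewhere). Additive generation. At time $0$: $\vartheta^{(0)}:=\nabla G^0(\mu_0)$,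 $C^{G,\vartheta,0}:=\sum_{i=1}^{N_0}\vartheta^{(0)}_i\mu_i(0)-G^0(\mu_0)$, $\varphi^{(0)}_i:=\vartheta^{(0)}_i-C^{G,\vartheta,0}$. Recursively for $k=1,2,\dots$, on $D^{k,n}$: $\vartheta^{(k,n)}(t):=\nabla G^{k,n}(\mu_{t-})$; $Q^{\vartheta,\mu,k,n}(t):=\sum_{i=1}^n\vartheta^{(k,n)}_i(t)\mu^{(k,n)}_i(t-)-\sum_{i=1}^n\vartheta^{(k,n)}_i(\tau_{k-1}+)\mu^{(k,n)}_i(\tau_{k-1}+)-I_{\mu^{k,n}}(\vartheta^{(k,n)})(t-)$; $\gamma^{G,\varphi,k,n}:=V^{\varphi,k-1,N_{\tau_{k-1}}}(\tau_{k-1})\,\sigma^{k,n}-G^{k,n}(\mu_{\tau_{k-1}+})$; $\widetilde G^{k,n}:=\gamma^{G,\varphi,k,n}+G^{k,n}$; $C^{\widetilde G,\vartheta,k,n}:=\sum_{i=1}^n\vartheta^{(k,n)}_i(\tau_{k-1}+)\mu^{(k,n)}_i(\tau_{k-1}+)-\widetilde G^{k,n}(\mu_{\tau_{k-1}+})$; $\varphi^{(k,n)}_i(t):=\vartheta^{(k,n)}_i(t)-Q^{\vartheta,\mu,k,n}(t)-C^{\widetilde G,\vartheta,k,n}$. The process $\varphi$ equals $\varphi^{(0)}$ at time $0$ and $\varphi^{(k,n)}$ on each $D^{k,n}$; it is a trading strategy. *)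

theory Defs
  imports "HOL-Analysis.Analysis"
begin

text \<open>Pathwise setting (one fixed \<omega>).
  Vectors of R^n are represented as functions nat \<Rightarrow> real, coordinates 0..n-1
  (paper: 1..n).
  S t : the capitalisation vector at time t; on epoch l (the interval (tau(l-1), tau l])
  only the first nd l coordinates are meaningful; nd 0 = N_0 is the dimension at time 0.
  tau : the reset times (extended reals, value infinity allowed).
  G l n : the member G^{l,n} of the piecewise generating function (G 0 (nd 0) = G^0).
  J l s : the value at time s (in epoch l) of the stochastic integral
  int_{tau(l-1)+}^s sum_i theta_i dmu_i with integrand theta = grad G^{l,nd l}(mu_-).\<close>

definition pd :: "((nat \<Rightarrow> real) \<Rightarrow> real) \<Rightarrow> nat \<Rightarrow> (nat \<Rightarrow> real) \<Rightarrow> real" where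
  "pd F i x = deriv (\<lambda>h. F (x(i := x i + h))) 0"

definition depends_only_on :: "nat \<Rightarrow> ((nat \<Rightarrow> real) \<Rightarrow> real) \<Rightarrow> bool" where
  "depends_only_on n F \<longleftrightarrow> (\<forall>x y. (\<forall>i<n. x i = y i) \<longrightarrow> F x = F y)"

definition cont_dim :: "nat \<Rightarrow> ((nat \<Rightarrow> real) \<Rightarrow> real) \<Rightarrow> bool" where
  "cont_dim n F \<longleftrightarrow> (\<forall>x. \<forall>e>0. \<exists>d>0. \<forall>y. (\<forall>i<n. \<bar>y i - x i\<bar> < d) \<longrightarrow> \<bar>F y - F x\<bar> < e)"

definition partially_diff_dim :: "nat \<Rightarrow> ((nat \<Rightarrow> real) \<Rightarrow> real) \<Rightarrow> bool" where
  "partially_diff_dim n F \<longleftrightarrow> (\<forall>x. \<forall>i<n. (\<lambda>h. F (x(i := x i + h))) differentiable (at 0))"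

definition C2_dim :: "nat \<Rightarrow> ((nat \<Rightarrow> real) \<Rightarrow> real) \<Rightarrow> bool" where
  "C2_dim n F \<longleftrightarrow> depends_only_on n F \<and> cont_dim n F \<and> partially_diff_dim n F
     \<and> (\<forall>i<n. cont_dim n (pd F i) \<and> partially_diff_dim n (pd F i))
     \<and> (\<forall>i<n. \<forall>j<n. cont_dim n (pd (pd F i) j))"

definition mkt_weight :: "(real \<Rightarrow> nat \<Rightarrow> real) \<Rightarrow> nat \<Rightarrow> real \<Rightarrow> nat \<Rightarrow> real" where
  "mkt_weight S n t i = S t i / (\<Sum>j<n. S t j)"

definition mu_right :: "(real \<Rightarrow> nat \<Rightarrow> real) \<Rightarrow> (nat \<Rightarrow> ereal) \<Rightarrow> (nat \<Rightarrow> nat) \<Rightarrow> nat \<Rightarrow> nat \<Rightarrow> real" where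
  "mu_right S \<tau> nd l i = Lim (at_right (real_of_ereal (\<tau> (l - 1)))) (\<lambda>s. mkt_weight S (nd l) s i)"

definition mu_left :: "(real \<Rightarrow> nat \<Rightarrow> real) \<Rightarrow> (nat \<Rightarrow> nat) \<Rightarrow> nat \<Rightarrow> real \<Rightarrow> nat \<Rightarrow> real" where
  "mu_left S nd l s i = Lim (at_left s) (\<lambda>r. mkt_weight S (nd l) r i)"

definition S_right :: "(real \<Rightarrow> nat \<Rightarrow> real) \<Rightarrow> (nat \<Rightarrow> ereal) \<Rightarrow> nat \<Rightarrow> nat \<Rightarrow> real" where
  "S_right S \<tau> l i = Lim (at_right (real_of_ereal (\<tau> (l - 1)))) (\<lambda>s. S s i)"

definition sigma_ratio :: "(real \<Rightarrow> nat \<Rightarrow> real) \<Rightarrow> (nat \<Rightarrow> ereal) \<Rightarrow> (nat \<Rightarrow> nat) \<Rightarrow> nat \<Rightarrow> real" where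
  "sigma_ratio S \<tau> nd l =
     (\<Sum>j<nd (l - 1). S (real_of_ereal (\<tau> (l - 1))) j) / (\<Sum>j<nd l. S_right S \<tau> l j)"

text \<open>sigma^{k,n}_{i,N_{tau_i}} = prod_{l=i}^k sigma^{l,N_{tau_l}} (empty product 1 when i = k+1)\<close>
definition sigma_prod :: "(real \<Rightarrow> nat \<Rightarrow> real) \<Rightarrow> (nat \<Rightarrow> ereal) \<Rightarrow> (nat \<Rightarrow> nat) \<Rightarrow> nat \<Rightarrow> nat \<Rightarrow> real" where
  "sigma_prod S \<tau> nd i k = (\<Prod>l\<in>{i..k}. sigma_ratio S \<tau> nd l)"

definition theta :: "(real \<Rightarrow> nat \<Rightarrow> real) \<Rightarrow> (nat \<Rightarrow> nat) \<Rightarrow> (nat \<Rightarrow> nat \<Rightarrow> (nat \<Rightarrow> real) \<Rightarrow> real)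
    \<Rightarrow> nat \<Rightarrow> real \<Rightarrow> nat \<Rightarrow> real" where
  "theta S nd G l s i = pd (G l (nd l)) i (mu_left S nd l s)"

definition theta_right :: "(real \<Rightarrow> nat \<Rightarrow> real) \<Rightarrow> (nat \<Rightarrow> ereal) \<Rightarrow> (nat \<Rightarrow> nat)
    \<Rightarrow> (nat \<Rightarrow> nat \<Rightarrow> (nat \<Rightarrow> real) \<Rightarrow> real) \<Rightarrow> nat \<Rightarrow> nat \<Rightarrow> real" where
  "theta_right S \<tau> nd G l i = Lim (at_right (real_of_ereal (\<tau> (l - 1)))) (\<lambda>s. theta S nd G l s i)"

definition Gamma :: "(real \<Rightarrow> nat \<Rightarrow> real) \<Rightarrow> (nat \<Rightarrow> ereal) \<Rightarrow> (nat \<Rightarrow> nat)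
    \<Rightarrow> (nat \<Rightarrow> nat \<Rightarrow> (nat \<Rightarrow> real) \<Rightarrow> real) \<Rightarrow> (nat \<Rightarrow> real \<Rightarrow> real) \<Rightarrow> nat \<Rightarrow> real \<Rightarrow> real" where
  "Gamma S \<tau> nd G J l s =
     G l (nd l) (mu_right S \<tau> nd l) - G l (nd l) (mkt_weight S (nd l) s) + J l s"

definition Qproc :: "(real \<Rightarrow> nat \<Rightarrow> real) \<Rightarrow> (nat \<Rightarrow> ereal) \<Rightarrow> (nat \<Rightarrow> nat)
    \<Rightarrow> (nat \<Rightarrow> nat \<Rightarrow> (nat \<Rightarrow> real) \<Rightarrow> real) \<Rightarrow> (nat \<Rightarrow> real \<Rightarrow> real) \<Rightarrow> nat \<Rightarrow> real \<Rightarrow> real" where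
  "Qproc S \<tau> nd G J l s =
     (\<Sum>i<nd l. theta S nd G l s i * mu_left S nd l s i)
     - (\<Sum>i<nd l. theta_right S \<tau> nd G l i * mu_right S \<tau> nd l i)
     - Lim (at_left s) (J l)"

definition theta0 :: "(real \<Rightarrow> nat \<Rightarrow> real) \<Rightarrow> (nat \<Rightarrow> nat) \<Rightarrow> (nat \<Rightarrow> nat \<Rightarrow> (nat \<Rightarrow> real) \<Rightarrow> real) \<Rightarrow> nat \<Rightarrow> real" where
  "theta0 S nd G i = pd (G 0 (nd 0)) i (mkt_weight S (nd 0) 0)"

definition C0 :: "(real \<Rightarrow> nat \<Rightarrow> real) \<Rightarrow> (nat \<Rightarrow> nat) \<Rightarrow> (nat \<Rightarrow> nat \<Rightarrow> (nat \<Rightarrow> real) \<Rightarrow> real) \<Rightarrow> real" where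
  "C0 S nd G = (\<Sum>i<nd 0. theta0 S nd G i * mkt_weight S (nd 0) 0 i) - G 0 (nd 0) (mkt_weight S (nd 0) 0)"

definition phi0 :: "(real \<Rightarrow> nat \<Rightarrow> real) \<Rightarrow> (nat \<Rightarrow> nat) \<Rightarrow> (nat \<Rightarrow> nat \<Rightarrow> (nat \<Rightarrow> real) \<Rightarrow> real) \<Rightarrow> nat \<Rightarrow> real" where
  "phi0 S nd G i = theta0 S nd G i - C0 S nd G"

definition V0 :: "(real \<Rightarrow> nat \<Rightarrow> real) \<Rightarrow> (nat \<Rightarrow> nat) \<Rightarrow> (nat \<Rightarrow> nat \<Rightarrow> (nat \<Rightarrow> real) \<Rightarrow> real) \<Rightarrow> real" where
  "V0 S nd G = (\<Sum>i<nd 0. phi0 S nd G i * mkt_weight S (nd 0) 0 i)"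

text \<open>Epoch l, given v = V^{phi,l-1,N_{tau_{l-1}}}(tau_{l-1}).\<close>
definition gamma_ep :: "(real \<Rightarrow> nat \<Rightarrow> real) \<Rightarrow> (nat \<Rightarrow> ereal) \<Rightarrow> (nat \<Rightarrow> nat)
    \<Rightarrow> (nat \<Rightarrow> nat \<Rightarrow> (nat \<Rightarrow> real) \<Rightarrow> real) \<Rightarrow> nat \<Rightarrow> real \<Rightarrow> real" where
  "gamma_ep S \<tau> nd G l v = v * sigma_ratio S \<tau> nd l - G l (nd l) (mu_right S \<tau> nd l)"

definition Ctilde_ep :: "(real \<Rightarrow> nat \<Rightarrow> real) \<Rightarrow> (nat \<Rightarrow> ereal) \<Rightarrow> (nat \<Rightarrow> nat)
    \<Rightarrow> (nat \<Rightarrow> nat \<Rightarrow> (nat \<Rightarrow> real) \<Rightarrow> real) \<Rightarrow> nat \<Rightarrow> real \<Rightarrow> real" where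
  "Ctilde_ep S \<tau> nd G l v =
     (\<Sum>i<nd l. theta_right S \<tau> nd G l i * mu_right S \<tau> nd l i)
     - (gamma_ep S \<tau> nd G l v + G l (nd l) (mu_right S \<tau> nd l))"

definition phi_ep :: "(real \<Rightarrow> nat \<Rightarrow> real) \<Rightarrow> (nat \<Rightarrow> ereal) \<Rightarrow> (nat \<Rightarrow> nat)
    \<Rightarrow> (nat \<Rightarrow> nat \<Rightarrow> (nat \<Rightarrow> real) \<Rightarrow> real) \<Rightarrow> (nat \<Rightarrow> real \<Rightarrow> real) \<Rightarrow> nat \<Rightarrow> real \<Rightarrow> real \<Rightarrow> nat \<Rightarrow> real" where
  "phi_ep S \<tau> nd G J l v s i =
     theta S nd G l s i - Qproc S \<tau> nd G J l s - Ctilde_ep S \<tau> nd G l v"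

definition V_ep :: "(real \<Rightarrow> nat \<Rightarrow> real) \<Rightarrow> (nat \<Rightarrow> ereal) \<Rightarrow> (nat \<Rightarrow> nat)
    \<Rightarrow> (nat \<Rightarrow> nat \<Rightarrow> (nat \<Rightarrow> real) \<Rightarrow> real) \<Rightarrow> (nat \<Rightarrow> real \<Rightarrow> real) \<Rightarrow> nat \<Rightarrow> real \<Rightarrow> real \<Rightarrow> real" where
  "V_ep S \<tau> nd G J l v s = (\<Sum>i<nd l. phi_ep S \<tau> nd G J l v s i * mkt_weight S (nd l) s i)"

text \<open>V_end l = relative wealth of phi at tau_l (computed in epoch l; for l = 0 at time 0).\<close>
primrec V_end :: "(real \<Rightarrow> nat \<Rightarrow> real) \<Rightarrow> (nat \<Rightarrow> ereal) \<Rightarrow> (nat \<Rightarrow> nat)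
    \<Rightarrow> (nat \<Rightarrow> nat \<Rightarrow> (nat \<Rightarrow> real) \<Rightarrow> real) \<Rightarrow> (nat \<Rightarrow> real \<Rightarrow> real) \<Rightarrow> nat \<Rightarrow> real" where
  "V_end S \<tau> nd G J 0 = V0 S nd G"
| "V_end S \<tau> nd G J (Suc m) =
     V_ep S \<tau> nd G J (Suc m) (V_end S \<tau> nd G J m) (real_of_ereal (\<tau> (Suc m)))"

text \<open>Relative wealth V^phi(t) of the additively generated strategy, for t in epoch k \<ge> 1.\<close>
definition rel_wealth :: "(real \<Rightarrow> nat \<Rightarrow> real) \<Rightarrow> (nat \<Rightarrow> ereal) \<Rightarrow> (nat \<Rightarrow> nat)
    \<Rightarrow> (nat \<Rightarrow> nat \<Rightarrow> (nat \<Rightarrow> real) \<Rightarrow> real) \<Rightarrow> (nat \<Rightarrow> real \<Rightarrow> real) \<Rightarrow> nat \<Rightarrow> real \<Rightarrow> real" where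
  "rel_wealth S \<tau> nd G J k t = V_ep S \<tau> nd G J k (V_end S \<tau> nd G J (k - 1)) t"

end

theory Submission
  imports Defs
begin

text \<open>Inside epoch l the relative wealth of the additively generated strategy is
  J_l + sigma_l v, where v is its value at the preceding reset: the corrections Q and
  C~ built into phi remove everything else. So the wealth solves a first order linear
  recursion and equals prod_l sigma_l + sum_l J_l sigma_{l+1..k}, each J_l taken at the
  end of its epoch. On the other side, with g_l the value of G^l at the end of epoch l,
  Gamma_l + C_l = J_l + sigma_l g_{l-1} - g_l, and the g terms telescope to
  (prod_l sigma_l) g_0 - g_k, where g_0 = G^0(mu_0) = 1.\<close>

lemma linear_recurrence_closed_form:
  fixes W a b :: "nat \<Rightarrow> 'a::comm_ring_1"
  assumes step: "\<And>m. m < k \<Longrightarrow> W (Suc m) = a (Suc m) * W m + b (Suc m)"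
  shows "W k = (\<Prod>l\<in>{1..k}. a l) * W 0 + (\<Sum>l\<in>{1..k}. b l * (\<Prod>j\<in>{l + 1..k}. a j))"
  using step
proof (induction k)
  case 0
  then show ?case by simp
next
  case (Suc k)
  have prod_step: "(\<Prod>j\<in>{l + 1..Suc k}. a j) = a (Suc k) * (\<Prod>j\<in>{l + 1..k}. a j)"
    if "l \<le> k" for l
    using that by (simp add: prod.cl_ivl_Suc)
  have "(\<Sum>l\<in>{1..k}. b l * (\<Prod>j\<in>{l + 1..Suc k}. a j))
      = a (Suc k) * (\<Sum>l\<in>{1..k}. b l * (\<Prod>j\<in>{l + 1..k}. a j))"
    by (simp add: sum_distrib_left prod_step ac_simps)
  then show ?case
    using Suc by (simp add: sum.cl_ivl_Suc prod.cl_ivl_Suc algebra_simps)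
qed

lemma weighted_telescoping:
  fixes a g :: "nat \<Rightarrow> 'a::comm_ring_1"
  shows "(\<Sum>l\<in>{1..k}. (a l * g (l - 1) - g l) * (\<Prod>j\<in>{l + 1..k}. a j))
           = (\<Prod>l\<in>{1..k}. a l) * g 0 - g k"
proof -
  have "g k = (\<Prod>l\<in>{1..k}. a l) * g 0
              + (\<Sum>l\<in>{1..k}. (g l - a l * g (l - 1)) * (\<Prod>j\<in>{l + 1..k}. a j))"
    by (rule linear_recurrence_closed_form) simp
  then show ?thesis
    by (simp add: algebra_simps sum_subtractf sum.distrib)
qed

lemma sum_mkt_weight_eq_1:
  assumes "\<And>i. i < n \<Longrightarrow> S s i \<ge> 0" and "\<exists>i<n. S s i > 0"
  shows "(\<Sum>i<n. mkt_weight S n s i) = 1"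
proof -
  obtain i where "i < n" "S s i > 0" using assms(2) by blast
  then have "(\<Sum>j<n. S s j) > 0"
    using assms(1) by (intro sum_pos2[of "{..<n}" i]) auto
  then show ?thesis
    unfolding mkt_weight_def by (simp add: sum_divide_distrib[symmetric])
qed

lemma V0_eq_G0:
  assumes "(\<Sum>i<nd 0. mkt_weight S (nd 0) 0 i) = 1"
  shows "V0 S nd G = G 0 (nd 0) (mkt_weight S (nd 0) 0)"
proof -
  have "V0 S nd G = (\<Sum>i<nd 0. theta0 S nd G i * mkt_weight S (nd 0) 0 i)
                    - C0 S nd G * (\<Sum>i<nd 0. mkt_weight S (nd 0) 0 i)"
    unfolding V0_def phi0_def by (simp add: sum_distrib_left algebra_simps sum_subtractf)
  then show ?thesis
    using assms unfolding C0_def by simp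
qed

text \<open>The jump condition on J cancels the left limits contained in Q.\<close>
lemma V_ep_eq_J_plus_sigma_ratio:
  assumes "\<And>i. i < nd l \<Longrightarrow> S s i \<ge> 0" and "\<exists>i<nd l. S s i > 0"
    and L: "(J l \<longlongrightarrow> L) (at_left s)"
    and jump: "J l s = L + (\<Sum>i<nd l. theta S nd G l s i
                                       * (mkt_weight S (nd l) s i - mu_left S nd l s i))"
  shows "V_ep S \<tau> nd G J l v s = J l s + v * sigma_ratio S \<tau> nd l"
proof -
  have weights: "(\<Sum>i<nd l. mkt_weight S (nd l) s i) = 1"
    using assms(1,2) by (rule sum_mkt_weight_eq_1)
  have left_lim: "Lim (at_left s) (J l) = L"
    using L by (simp add: tendsto_Lim)
  have "V_ep S \<tau> nd G J l v s = (\<Sum>i<nd l. theta S nd G l s i * mkt_weight S (nd l) s i)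
      - (Qproc S \<tau> nd G J l s + Ctilde_ep S \<tau> nd G l v) * (\<Sum>i<nd l. mkt_weight S (nd l) s i)"
    unfolding V_ep_def phi_ep_def
    by (simp add: sum_distrib_left algebra_simps sum_subtractf sum.distrib)
  also have "\<dots> = J l s + v * sigma_ratio S \<tau> nd l"
    unfolding weights Qproc_def Ctilde_ep_def gamma_ep_def left_lim jump
    by (simp add: algebra_simps sum_subtractf)
  finally show ?thesis .
qed

lemma reset_time_before_finite:
  fixes \<tau> :: "nat \<Rightarrow> ereal"
  assumes "incseq \<tau>" and "\<tau> 0 = 0" and "l \<le> j" and "\<tau> j < ereal t"
  shows "ereal (real_of_ereal (\<tau> l)) = \<tau> l"
proof -
  have "0 \<le> \<tau> l" "\<tau> l < ereal t"
    using assms incseqD[OF assms(1), of 0 l] incseqD[OF assms(1) assms(3)] by auto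
  then show ?thesis by (cases "\<tau> l") auto
qed

definition epoch_end :: "(nat \<Rightarrow> ereal) \<Rightarrow> nat \<Rightarrow> real \<Rightarrow> nat \<Rightarrow> real" where
  "epoch_end \<tau> k t l = (if l < k then real_of_ereal (\<tau> l) else t)"

lemma epoch_end_in_epoch:
  fixes \<tau> :: "nat \<Rightarrow> ereal"
  assumes inc: "incseq \<tau>" and "\<tau> 0 = 0"
    and strict: "\<And>l. \<tau> l < \<infinity> \<Longrightarrow> \<tau> l < \<tau> (Suc l)"
    and t_in: "\<tau> (k - 1) < ereal t" "ereal t \<le> \<tau> k"
    and l: "1 \<le> l" "l \<le> k"
  shows "\<tau> (l - 1) < ereal (epoch_end \<tau> k t l) \<and> ereal (epoch_end \<tau> k t l) \<le> \<tau> l"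
proof (cases "l < k")
  case True
  then have finite_end: "ereal (epoch_end \<tau> k t l) = \<tau> l"
    using reset_time_before_finite[OF inc \<open>\<tau> 0 = 0\<close> _ t_in(1), of l] by (simp add: epoch_end_def)
  have "\<tau> (l - 1) \<le> ereal (epoch_end \<tau> k t l)"
    unfolding finite_end by (rule incseqD[OF inc]) simp
  then have "\<tau> (l - 1) < \<infinity>"
    by (rule order.strict_trans1) simp
  with strict[of "l - 1"] finite_end l show ?thesis by simp
next
  case False
  with l t_in show ?thesis by (simp add: epoch_end_def)
qed

lemma rel_wealth_eq_closed_form:
  assumes "1 \<le> k" and "V_end S \<tau> nd G J 0 = 1"
    and wealth: "\<And>l v. 1 \<le> l \<Longrightarrow> l \<le> k \<Longrightarrow> V_ep S \<tau> nd G J l v (epoch_end \<tau> k t l)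
                      = J l (epoch_end \<tau> k t l) + v * sigma_ratio S \<tau> nd l"
  shows "rel_wealth S \<tau> nd G J k t = (\<Prod>l\<in>{1..k}. sigma_ratio S \<tau> nd l)
           + (\<Sum>l\<in>{1..k}. J l (epoch_end \<tau> k t l) * sigma_prod S \<tau> nd (l + 1) k)"
proof -
  define W where "W l = (if l < k then V_end S \<tau> nd G J l else rel_wealth S \<tau> nd G J k t)" for l
  have "W (Suc m) = sigma_ratio S \<tau> nd (Suc m) * W m + J (Suc m) (epoch_end \<tau> k t (Suc m))"
    if "m < k" for m
  proof (cases "Suc m < k")
    case True
    then show ?thesis using wealth[of "Suc m"] by (simp add: W_def epoch_end_def)
  next
    case False
    with that have "k = Suc m" by simp
    then show ?thesis using wealth[of "Suc m"] by (simp add: W_def epoch_end_def rel_wealth_def)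
  qed
  from linear_recurrence_closed_form[of k W, OF this] show ?thesis
    using assms(1,2) by (simp add: W_def sigma_prod_def)
qed

lemma G_plus_EG_plus_C_eq_closed_form:
  assumes "1 \<le> k" and "\<tau> 0 = 0" and G0: "G 0 (nd 0) (mkt_weight S (nd 0) 0) = 1"
  shows "G k (nd k) (mkt_weight S (nd k) t)
           + ((\<Sum>l\<in>{1..k - 1}. Gamma S \<tau> nd G J l (real_of_ereal (\<tau> l)) * sigma_prod S \<tau> nd (l + 1) k)
              + Gamma S \<tau> nd G J k t)
           + (\<Sum>l\<in>{1..k}. (sigma_ratio S \<tau> nd l
                              * G (l - 1) (nd (l - 1)) (mkt_weight S (nd (l - 1)) (real_of_ereal (\<tau> (l - 1))))
                            - G l (nd l) (mu_right S \<tau> nd l))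
                           * sigma_prod S \<tau> nd (l + 1) k)
         = (\<Prod>l\<in>{1..k}. sigma_ratio S \<tau> nd l)
           + (\<Sum>l\<in>{1..k}. J l (epoch_end \<tau> k t l) * sigma_prod S \<tau> nd (l + 1) k)"
    (is "?lhs = _")
proof -
  let ?\<sigma> = "sigma_ratio S \<tau> nd" and ?P = "\<lambda>l. sigma_prod S \<tau> nd (l + 1) k"
    and ?x = "epoch_end \<tau> k t"
  define g where "g l = G l (nd l) (mkt_weight S (nd l) (?x l))" for l
  let ?r = "\<lambda>l. G l (nd l) (mu_right S \<tau> nd l)"
  have split_last: "(\<Sum>l\<in>{1..k}. f l) = (\<Sum>l\<in>{1..k - 1}. f l) + f k" for f :: "nat \<Rightarrow> real"
    using sum.cl_ivl_Suc[of f 1 "k - 1"] assms(1) by simp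
  have "(\<Sum>l\<in>{1..k - 1}. Gamma S \<tau> nd G J l (real_of_ereal (\<tau> l)) * ?P l)
      = (\<Sum>l\<in>{1..k - 1}. (?r l - g l + J l (?x l)) * ?P l)"
    by (intro sum.cong) (auto simp: Gamma_def g_def epoch_end_def)
  moreover have "Gamma S \<tau> nd G J k t = (?r k - g k + J k (?x k)) * ?P k"
    by (simp add: Gamma_def g_def epoch_end_def sigma_prod_def)
  ultimately have Gamma_sum: "(\<Sum>l\<in>{1..k - 1}. Gamma S \<tau> nd G J l (real_of_ereal (\<tau> l)) * ?P l)
      + Gamma S \<tau> nd G J k t = (\<Sum>l\<in>{1..k}. (?r l - g l + J l (?x l)) * ?P l)"
    unfolding split_last by simp
  have C_sum: "(\<Sum>l\<in>{1..k}. (?\<sigma> l * G (l - 1) (nd (l - 1)) (mkt_weight S (nd (l - 1)) (real_of_ereal (\<tau> (l - 1))))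
                      - ?r l) * ?P l)
      = (\<Sum>l\<in>{1..k}. (?\<sigma> l * g (l - 1) - ?r l) * ?P l)"
    by (intro sum.cong) (auto simp: g_def epoch_end_def)
  have "?lhs = g k + (\<Sum>l\<in>{1..k}. (?r l - g l + J l (?x l)) * ?P l)
                   + (\<Sum>l\<in>{1..k}. (?\<sigma> l * g (l - 1) - ?r l) * ?P l)"
    unfolding Gamma_sum C_sum by (simp add: g_def epoch_end_def)
  also have "\<dots> = g k + (\<Sum>l\<in>{1..k}. J l (?x l) * ?P l)
                   + (\<Sum>l\<in>{1..k}. (?\<sigma> l * g (l - 1) - g l) * ?P l)"
    by (simp add: sum.distrib[symmetric] algebra_simps)
  also have "(\<Sum>l\<in>{1..k}. (?\<sigma> l * g (l - 1) - g l) * ?P l) = (\<Prod>l\<in>{1..k}. ?\<sigma> l) - g k"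
    using weighted_telescoping[of ?\<sigma> g k] G0 assms(1,2)
    by (simp add: sigma_prod_def g_def epoch_end_def)
  finally show ?thesis by simp
qed

theorem theorem3p4:
  fixes S :: "real \<Rightarrow> nat \<Rightarrow> real" and \<tau> :: "nat \<Rightarrow> ereal" and nd :: "nat \<Rightarrow> nat"
    and G :: "nat \<Rightarrow> nat \<Rightarrow> (nat \<Rightarrow> real) \<Rightarrow> real" and J :: "nat \<Rightarrow> real \<Rightarrow> real"
    and N0 k n :: nat and t :: real
  assumes tau0: "\<tau> 0 = 0"
    and tau_mono: "\<And>l. \<tau> l \<le> \<tau> (Suc l)"
    and tau_strict: "\<And>l. \<tau> l < \<infinity> \<Longrightarrow> \<tau> l < \<tau> (Suc l)"
    and tau_lim: "(\<tau> \<longlongrightarrow> \<infinity>) sequentially"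
    and nd0: "nd 0 = N0" and N0_pos: "N0 \<ge> 1"
    and nd_pos: "\<And>l. nd l \<ge> 1"
    and S0_nonneg: "\<And>i. i < N0 \<Longrightarrow> S 0 i \<ge> 0"
    and S0_pos: "\<exists>i<N0. S 0 i > 0"
    and S_nonneg: "\<And>l s i. l \<ge> 1 \<Longrightarrow> \<tau> (l - 1) < ereal s \<Longrightarrow> ereal s \<le> \<tau> l \<Longrightarrow> i < nd l
                    \<Longrightarrow> S s i \<ge> 0"
    and S_pos: "\<And>l s. l \<ge> 1 \<Longrightarrow> \<tau> (l - 1) < ereal s \<Longrightarrow> ereal s \<le> \<tau> l \<Longrightarrow> \<exists>i<nd l. S s i > 0"
    and S_right_lim: "\<And>l i. l \<ge> 1 \<Longrightarrow> \<tau> (l - 1) < \<infinity> \<Longrightarrow> i < nd l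
                    \<Longrightarrow> \<exists>L. ((\<lambda>s. S s i) \<longlongrightarrow> L) (at_right (real_of_ereal (\<tau> (l - 1))))"
    and S_left_lim: "\<And>l s i. l \<ge> 1 \<Longrightarrow> \<tau> (l - 1) < ereal s \<Longrightarrow> ereal s \<le> \<tau> l \<Longrightarrow> i < nd l
                    \<Longrightarrow> \<exists>L. ((\<lambda>r. S r i) \<longlongrightarrow> L) (at_left s)"
    and S_rcont: "\<And>l s i. l \<ge> 1 \<Longrightarrow> \<tau> (l - 1) < ereal s \<Longrightarrow> ereal s < \<tau> l \<Longrightarrow> i < nd l
                    \<Longrightarrow> continuous (at_right s) (\<lambda>r. S r i)"
    and G0_C2: "C2_dim N0 (G 0 N0)"
    and G_C2: "\<And>l m. l \<ge> 1 \<Longrightarrow> m \<ge> 1 \<Longrightarrow> C2_dim m (G l m)"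
    and G0_norm: "G 0 N0 (mkt_weight S N0 0) = 1"
    and J_start: "\<And>l. l \<ge> 1 \<Longrightarrow> \<tau> (l - 1) < \<infinity>
                    \<Longrightarrow> (J l \<longlongrightarrow> 0) (at_right (real_of_ereal (\<tau> (l - 1))))"
    and J_rcont: "\<And>l s. l \<ge> 1 \<Longrightarrow> \<tau> (l - 1) < ereal s \<Longrightarrow> ereal s < \<tau> l
                    \<Longrightarrow> continuous (at_right s) (J l)"
    and J_jump: "\<And>l s. l \<ge> 1 \<Longrightarrow> \<tau> (l - 1) < ereal s \<Longrightarrow> ereal s \<le> \<tau> l
                    \<Longrightarrow> \<exists>L. (J l \<longlongrightarrow> L) (at_left s) \<and>
                        J l s = L + (\<Sum>i<nd l. theta S nd G l s i
                                       * (mkt_weight S (nd l) s i - mu_left S nd l s i))"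
    and k_pos: "k \<ge> 1" and nd_k: "nd k = n"
    and t_pos: "t > 0"
    and t_in: "\<tau> (k - 1) < ereal t" "ereal t \<le> \<tau> k"
  shows "rel_wealth S \<tau> nd G J k t =
           G k n (mkt_weight S n t)
           + ((\<Sum>l\<in>{1..k - 1}. Gamma S \<tau> nd G J l (real_of_ereal (\<tau> l)) * sigma_prod S \<tau> nd (l + 1) k)
              + Gamma S \<tau> nd G J k t)
           + (\<Sum>l\<in>{1..k}. (sigma_ratio S \<tau> nd l
                              * G (l - 1) (nd (l - 1)) (mkt_weight S (nd (l - 1)) (real_of_ereal (\<tau> (l - 1))))
                            - G l (nd l) (mu_right S \<tau> nd l))
                           * sigma_prod S \<tau> nd (l + 1) k)"
proof -
  have inc: "incseq \<tau>" using tau_mono by (rule incseq_SucI)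
  have "V_ep S \<tau> nd G J l v (epoch_end \<tau> k t l) = J l (epoch_end \<tau> k t l) + v * sigma_ratio S \<tau> nd l"
    if l: "1 \<le> l" "l \<le> k" for l v
  proof -
    have epoch: "\<tau> (l - 1) < ereal (epoch_end \<tau> k t l)" "ereal (epoch_end \<tau> k t l) \<le> \<tau> l"
      using epoch_end_in_epoch[OF inc tau0 _ t_in l] tau_strict by blast+
    obtain L where L: "(J l \<longlongrightarrow> L) (at_left (epoch_end \<tau> k t l))"
      and jump: "J l (epoch_end \<tau> k t l) = L + (\<Sum>i<nd l. theta S nd G l (epoch_end \<tau> k t l) i
          * (mkt_weight S (nd l) (epoch_end \<tau> k t l) i - mu_left S nd l (epoch_end \<tau> k t l) i))"
      using J_jump[OF l(1) epoch] by blast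
    show ?thesis
      using S_nonneg[OF l(1) epoch] S_pos[OF l(1) epoch] L jump by (rule V_ep_eq_J_plus_sigma_ratio)
  qed
  moreover have "V_end S \<tau> nd G J 0 = 1"
    using V0_eq_G0 sum_mkt_weight_eq_1 S0_nonneg S0_pos G0_norm by (simp add: nd0)
  ultimately show ?thesis
    using rel_wealth_eq_closed_form[OF k_pos] G_plus_EG_plus_C_eq_closed_form[where \<tau> = \<tau>, OF k_pos tau0] G0_norm
    by (simp add: nd0 nd_k[symmetric])
qed

end
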